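(* Let $(\mathcal Q,d)$ be a Hadamard space, $Y$ a $\mathcal Q$-valued random variable and $o\in\mathcal Q$. Let $m\in\arg\min_{q\in\mathcal Q}\mathbb E[d(Y,q)-d(Y,o)]$ (a Fréchet median), let $q\in\mathcal Q\setminus\{m\}$ and let $\eta\in[0,1]$. Then $$\mathbb E\big[d(Y,q)-d(Y,m)\big]\ \ge\ \tfrac12\,\eta^2\, d(q,m)^2\,\mathbb E\Big[\max\big(d(Y,m),d(Y,q)\big)^{-1}\,\mathbf 1_{A(m,q,\eta)}(Y)\Big].$$
   Context: A Hadamard space is a complete metric space $(\mathcal Q,d)$ such that for all $y_0,y_1\in\mathcal Q$ there is $m\in\mathcal Q$ with $\frac12 d(y_0,q)^2+\frac12 d(y_1,q)^2-\frac14 d(y_0,y_1)^2\ge d(q,m)^2$ for all $q\in\mathcal Q$ (complete CAT(0) space). For $p\ne q$ in a Hadamard space, $\gamma_{p\to q}:[0,d(p,q)]\to\mathcal Q$ denotes the unique unit-speed geodesic from $p$ to $q$ (i.e. $d(\gamma(s),\gamma(t))=|s-t|$). For a real function $g$, $g^{\oplus}$, $g^{\ominus}$ denote right and left derivatives. For $y\in\mathcal Q$ write $f_y(t):=d(y,\gamma_{p\to q}(t))$. The "bowtie complement" is $$A(p,q,\eta):=\Big\{y\in\mathcal Q:\ \max\big(f_y^{\oplus}(0)^2,\ f_y^{\ominus}(d(q,p))^2\big)\le 1-\eta^2\Big\}.$$ *)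

theory Defs
  imports "HOL-Probability.Probability"
begin

text \<open>Hadamard space: complete metric space with the midpoint (CAT(0)) inequality.\<close>
definition hadamard :: "'a::complete_space itself \<Rightarrow> bool" where
  "hadamard _ \<longleftrightarrow>
     (\<forall>y0 y1::'a. \<exists>m::'a. \<forall>q::'a.
        (1/2) * (dist y0 q)^2 + (1/2) * (dist y1 q)^2 - (1/4) * (dist y0 y1)^2 \<ge> (dist q m)^2)"

definition unit_geodesic :: "'a::metric_space \<Rightarrow> 'a \<Rightarrow> (real \<Rightarrow> 'a) \<Rightarrow> bool" where
  "unit_geodesic p q \<gamma> \<longleftrightarrow> \<gamma> 0 = p \<and> \<gamma> (dist p q) = q \<and>
     (\<forall>s\<in>{0..dist p q}. \<forall>t\<in>{0..dist p q}. dist (\<gamma> s) (\<gamma> t) = \<bar>s - t\<bar>)"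

definition geod :: "'a::metric_space \<Rightarrow> 'a \<Rightarrow> real \<Rightarrow> 'a" where
  "geod p q = (SOME \<gamma>. unit_geodesic p q \<gamma>)"

definition right_deriv :: "(real \<Rightarrow> real) \<Rightarrow> real \<Rightarrow> real" where
  "right_deriv g t = Lim (at_right t) (\<lambda>s. (g s - g t) / (s - t))"

definition left_deriv :: "(real \<Rightarrow> real) \<Rightarrow> real \<Rightarrow> real" where
  "left_deriv g t = Lim (at_left t) (\<lambda>s. (g s - g t) / (s - t))"

definition dist_along :: "'a::metric_space \<Rightarrow> 'a \<Rightarrow> 'a \<Rightarrow> real \<Rightarrow> real" where
  "dist_along p q y t = dist y (geod p q t)"

definition bowtie_compl :: "'a::metric_space \<Rightarrow> 'a \<Rightarrow> real \<Rightarrow> 'a set" where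
  "bowtie_compl p q \<eta> = {y. max ((right_deriv (dist_along p q y) 0)^2)
                                 ((left_deriv (dist_along p q y) (dist q p))^2) \<le> 1 - \<eta>^2}"

end

theory Submission
  imports Defs
begin

text \<open>
  Let \<open>\<gamma>\<close> be the unit-speed geodesic from \<open>m\<close> to \<open>q\<close>, \<open>L = d(m,q)\<close> and \<open>f\<^sub>y(s) = d(y, \<gamma> s)\<close>.
  The CAT(0) midpoint inequality makes both \<open>f\<^sub>y\<close> and \<open>f\<^sub>y\<^sup>2 - s\<^sup>2\<close> convex. Convexity of \<open>f\<^sub>y\<close>
  turns its one-sided derivatives into monotone limits of difference quotients, so minimality
  of \<open>m\<close> and dominated convergence give \<open>E[f\<^sub>Y\<^sup>+(0)] \<ge> 0\<close>, and \<open>L f\<^sub>y\<^sup>+(0) \<le> d(y,q) - d(y,m)\<close>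
  pointwise. Convexity of \<open>f\<^sub>y\<^sup>2 - s\<^sup>2\<close> is comparison with the Euclidean triangle of sides
  \<open>a = d(y,m)\<close>, \<open>b = d(y,q)\<close>, \<open>L\<close>: with \<open>c = (b\<^sup>2 - a\<^sup>2 - L\<^sup>2)/(2aL)\<close> it yields
  \<open>f\<^sub>y\<^sup>+(0) \<le> c \<le> f\<^sub>y\<^sup>-(L)\<close>. On the bowtie complement this forces \<open>c\<^sup>2 \<le> 1 - \<eta>\<^sup>2\<close>, and the law of
  cosines gives \<open>b - a - Lc = L\<^sup>2(1 - c\<^sup>2)/(b + a + Lc) \<ge> \<eta>\<^sup>2 L\<^sup>2 / (2 max a b)\<close>.
  Adding the two pointwise bounds and integrating proves the theorem.
\<close>

section \<open>Midpoints and geodesics in Hadamard spaces\<close>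

lemma hadamard_midpointE:
  fixes x y :: "'a::complete_space"
  assumes "hadamard TYPE('a)"
  obtains w :: 'a
  where "\<And>z. (dist z w)\<^sup>2 \<le> (1/2) * (dist x z)\<^sup>2 + (1/2) * (dist y z)\<^sup>2 - (1/4) * (dist x y)\<^sup>2"
  using assms unfolding hadamard_def by blast

lemma hadamard_metric_midpoint:
  fixes p q :: "'a::complete_space"
  assumes H: "hadamard TYPE('a)"
  obtains w :: 'a where "dist p w = dist p q / 2" "dist w q = dist p q / 2"
proof -
  obtain w :: 'a where w: "\<And>z. (dist z w)\<^sup>2 \<le> (1/2) * (dist p z)\<^sup>2 + (1/2) * (dist q z)\<^sup>2 - (1/4) * (dist p q)\<^sup>2"
    using hadamard_midpointE[OF H] by blast
  have "(dist p w)\<^sup>2 \<le> (dist p q / 2)\<^sup>2" "(dist w q)\<^sup>2 \<le> (dist p q / 2)\<^sup>2"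
    using w[of p] w[of q] by (simp_all add: dist_commute power_divide)
  then have "dist p w \<le> dist p q / 2" "dist w q \<le> dist p q / 2"
    by (auto intro: power2_le_imp_le)
  with dist_triangle[of p q w] show ?thesis
    by (intro that[of w]) linarith+
qed

lemma hadamard_approx_between:
  assumes H: "hadamard TYPE('a::complete_space)" and t: "0 \<le> t" "t \<le> dist p q"
  shows "\<exists>r::'a. dist p r \<le> t + dist p q / 2^n \<and> dist r q \<le> dist p q - t + dist p q / 2^n"
  using t
proof (induction n arbitrary: p q t)
  case 0
  then show ?case by (intro exI[of _ p]) simp
next
  case (Suc n)
  define L where "L = dist p q"
  obtain w where w: "dist p w = L/2" "dist w q = L/2"
    using hadamard_metric_midpoint[OF H] unfolding L_def by blast
  have e: "L / 2 ^ Suc n = (L/2) / 2^n" by simp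
  show ?case
  proof (cases "t \<le> L/2")
    case True
    then obtain r where r: "dist p r \<le> t + (L/2)/2^n" "dist r w \<le> L/2 - t + (L/2)/2^n"
      using Suc.IH[where p=p and q=w and t=t] Suc.prems w by auto
    with dist_triangle[of r q w] w show ?thesis
      unfolding L_def[symmetric] e by (intro exI[of _ r]) auto
  next
    case False
    then obtain r where r: "dist w r \<le> t - L/2 + (L/2)/2^n" "dist r q \<le> L/2 - (t - L/2) + (L/2)/2^n"
      using Suc.IH[where p=w and q=q and t="t - L/2"] Suc.prems w L_def by auto
    with dist_triangle[of p r w] w show ?thesis
      unfolding L_def[symmetric] e by (intro exI[of _ r]) auto
  qed
qed

text \<open>Here \<open>\<alpha>\<close> and \<open>\<beta>\<close> are the distances from \<open>p\<close> and \<open>q\<close> to the midpoint of two points at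
  distance \<open>D\<close> that are both \<open>e\<close>-almost between \<open>p\<close> and \<open>q\<close> at parameter \<open>t\<close>.\<close>
lemma midpoint_defect_bound:
  fixes L t e \<alpha> \<beta> D :: real
  assumes "0 \<le> t" "t \<le> L" "0 \<le> e" "0 \<le> \<alpha>" "0 \<le> \<beta>" "L \<le> \<alpha> + \<beta>"
    and \<alpha>: "\<alpha>\<^sup>2 \<le> (t + e)\<^sup>2 - D\<^sup>2/4" and \<beta>: "\<beta>\<^sup>2 \<le> (L - t + e)\<^sup>2 - D\<^sup>2/4"
  shows "D\<^sup>2 \<le> 16 * e * (L + e)"
proof -
  have "\<alpha>\<^sup>2 \<le> (t + e)\<^sup>2" using \<alpha> zero_le_power2[of D] by linarith
  then have "\<alpha> \<le> t + e" using assms by (auto intro: power2_le_imp_le)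
  then have \<beta>_ge: "L - t - e \<le> \<beta>" using assms by linarith
  show ?thesis
  proof (cases "2 * e \<le> L - t + e")
    case True
    then have "(L - t - e)\<^sup>2 \<le> \<beta>\<^sup>2" using \<beta>_ge by (intro power_mono) auto
    with \<beta> have "D\<^sup>2/4 \<le> 4 * e * (L - t + e) - 4 * e\<^sup>2"
      by (simp add: power2_eq_square algebra_simps)
    moreover have "4 * e * (L - t + e) \<le> 4 * e * (L + e)"
      using assms by (intro mult_left_mono) auto
    ultimately show ?thesis using zero_le_power2[of e] by linarith
  next
    case False
    then have "(L - t + e)\<^sup>2 \<le> (2 * e)\<^sup>2" using assms by (intro power_mono) auto
    then have "(L - t + e)\<^sup>2 \<le> 4 * e\<^sup>2" by (simp add: power_mult_distrib)
    with \<beta> have "D\<^sup>2 \<le> 16 * e\<^sup>2" using zero_le_power2[of \<beta>] by linarith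
    moreover have "e * e \<le> e * (L + e)" using assms by (intro mult_left_mono) auto
    ultimately show ?thesis by (simp add: power2_eq_square)
  qed
qed

lemma hadamard_approx_between_close:
  assumes H: "hadamard TYPE('a::complete_space)" and "0 \<le> t" "t \<le> dist p q" "0 \<le> e"
    and "dist p r \<le> t + e" "dist r q \<le> dist p q - t + e"
    and "dist p r' \<le> t + e" "dist r' q \<le> dist p q - t + e"
  shows "(dist r (r'::'a))\<^sup>2 \<le> 16 * e * (dist p q + e)"
proof -
  obtain w :: 'a where w: "\<And>z. (dist z w)\<^sup>2 \<le> (1/2) * (dist r z)\<^sup>2 + (1/2) * (dist r' z)\<^sup>2 - (1/4) * (dist r r')\<^sup>2"
    using hadamard_midpointE[OF H] by blast
  have "(dist r p)\<^sup>2 \<le> (t + e)\<^sup>2" "(dist r' p)\<^sup>2 \<le> (t + e)\<^sup>2"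
    "(dist r q)\<^sup>2 \<le> (dist p q - t + e)\<^sup>2" "(dist r' q)\<^sup>2 \<le> (dist p q - t + e)\<^sup>2"
    using assms by (auto intro!: power_mono simp: dist_commute)
  then have "(dist p w)\<^sup>2 \<le> (t + e)\<^sup>2 - (dist r r')\<^sup>2/4"
    "(dist w q)\<^sup>2 \<le> (dist p q - t + e)\<^sup>2 - (dist r r')\<^sup>2/4"
    using w[of p] w[of q] by (auto simp: dist_commute)
  with assms show ?thesis
    by (intro midpoint_defect_bound[where \<alpha> = "dist p w" and \<beta> = "dist w q"] dist_triangle) auto
qed

lemma hadamard_between_unique:
  assumes H: "hadamard TYPE('a::complete_space)" and "0 \<le> t" "t \<le> dist p q"
    and "dist p r = t" "dist r q = dist p q - t" "dist p r' = t" "dist r' q = dist p q - t"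
  shows "r = (r'::'a)"
  using hadamard_approx_between_close[OF H, of t p q 0 r r'] assms by simp

lemma hadamard_approx_between_Cauchy:
  assumes H: "hadamard TYPE('a::complete_space)" and t: "0 \<le> t" "t \<le> dist p q"
    and R: "\<And>n. dist p (R n) \<le> t + dist p q / 2^n" "\<And>n. dist (R n) (q::'a) \<le> dist p q - t + dist p q / 2^n"
  shows "Cauchy R"
proof (rule metric_CauchyI)
  fix e :: real assume e: "0 < e"
  define L where "L = dist p q"
  have L0: "0 \<le> L" unfolding L_def by simp
  have "(\<lambda>n. 32 * L\<^sup>2 / 2^n) \<longlonglongrightarrow> 0" by (rule LIMSEQ_divide_realpow_zero) simp
  from order_tendstoD(2)[OF this, of "e\<^sup>2"] e
  obtain N where N: "32 * L\<^sup>2 / 2^N < e\<^sup>2"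
    by (auto simp: eventually_sequentially)
  define \<epsilon> where "\<epsilon> = L / 2^N"
  have \<epsilon>: "0 \<le> \<epsilon>" "\<epsilon> \<le> L"
    using L0 divide_left_mono[of 1 "2^N" L] unfolding \<epsilon>_def by auto
  have mono: "L / 2^k \<le> \<epsilon>" if "N \<le> k" for k
    using L0 that unfolding \<epsilon>_def by (intro divide_left_mono) (auto intro: power_increasing)
  show "\<exists>M. \<forall>i\<ge>M. \<forall>j\<ge>M. dist (R i) (R j) < e"
  proof (intro exI allI impI)
    fix i j assume "N \<le> i" "N \<le> j"
    then have "(dist (R i) (R j))\<^sup>2 \<le> 16 * \<epsilon> * (L + \<epsilon>)"
      using R[of i] R[of j] mono[of i] mono[of j] t \<epsilon>
      by (intro hadamard_approx_between_close[OF H, of t p q, folded L_def]) (auto simp: L_def)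
    also have "\<dots> \<le> 16 * \<epsilon> * (2 * L)" using \<epsilon> by (intro mult_left_mono) auto
    also have "\<dots> = 32 * L\<^sup>2 / 2^N" by (simp add: \<epsilon>_def power2_eq_square)
    also have "\<dots> < e\<^sup>2" by (rule N)
    finally show "dist (R i) (R j) < e" by (rule power_less_imp_less_base) (use e in simp)
  qed
qed

lemma hadamard_between_exists:
  assumes H: "hadamard TYPE('a::complete_space)" and t: "0 \<le> t" "t \<le> dist p q"
  shows "\<exists>r::'a. dist p r = t \<and> dist r q = dist p q - t"
proof -
  define L where "L = dist p q"
  obtain R where R: "\<And>n. dist p (R n) \<le> t + L / 2^n" "\<And>n. dist (R n) q \<le> L - t + L / 2^n"
    using hadamard_approx_between[OF H t] unfolding L_def by metis
  obtain r where r: "R \<longlonglongrightarrow> r"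
    using hadamard_approx_between_Cauchy[OF H t R[unfolded L_def]] Cauchy_convergent convergent_def by blast
  have z: "(\<lambda>n. L / 2^n) \<longlonglongrightarrow> 0" by (rule LIMSEQ_divide_realpow_zero) simp
  have "dist p r \<le> t + 0"
    by (rule LIMSEQ_le[OF tendsto_dist[OF tendsto_const r] tendsto_add[OF tendsto_const z]])
      (use R in auto)
  moreover have "dist r q \<le> L - t + 0"
    by (rule LIMSEQ_le[OF tendsto_dist[OF r tendsto_const] tendsto_add[OF tendsto_const z]])
      (use R in auto)
  ultimately show ?thesis
    using dist_triangle[of p q r] unfolding L_def by (intro exI[of _ r]) auto
qed

lemma hadamard_unit_geodesic_exists:
  assumes H: "hadamard TYPE('a::complete_space)"
  shows "\<exists>\<gamma>. unit_geodesic p (q::'a) \<gamma>"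
proof -
  define L where "L = dist p q"
  define G where "G t = (SOME r. dist p r = t \<and> dist r q = L - t)" for t
  have G: "dist p (G t) = t" "dist (G t) q = L - t" if "0 \<le> t" "t \<le> L" for t
    using someI_ex[OF hadamard_between_exists[OF H that[unfolded L_def]]] unfolding G_def L_def by auto
  have G_dist: "dist (G s) (G t) = t - s" if st: "0 \<le> s" "s \<le> t" "t \<le> L" for s t
  proof -
    have Gt: "dist p (G t) = t" "dist (G t) q = L - t" using G st by auto
    obtain w where w: "dist p w = s" "dist w (G t) = dist p (G t) - s"
      using hadamard_between_exists[OF H, of s p "G t"] st Gt by auto
    have "dist w q = L - s"
      using dist_triangle[of w q "G t"] dist_triangle[of p q w] w Gt unfolding L_def by auto
    then have "w = G s"
      using w G[of s] st by (intro hadamard_between_unique[OF H, of s p q]) (auto simp: L_def)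
    with w Gt show ?thesis by simp
  qed
  have "unit_geodesic p q G"
    unfolding unit_geodesic_def L_def[symmetric]
  proof (intro conjI ballI)
    have "0 \<le> L" unfolding L_def by simp
    then show "G 0 = p" "G L = q" using G[of 0] G[of L] by auto
    fix s t assume "s \<in> {0..L}" "t \<in> {0..L}"
    then show "dist (G s) (G t) = \<bar>s - t\<bar>"
      using G_dist[of s t] G_dist[of t s] by (cases "s \<le> t") (auto simp: dist_commute)
  qed
  then show ?thesis by blast
qed

lemma unit_geodesic_geod:
  assumes "hadamard TYPE('a::complete_space)"
  shows "unit_geodesic p (q::'a) (geod p q)"
  unfolding geod_def using hadamard_unit_geodesic_exists[OF assms] by (rule someI_ex)

lemma unit_geodesic_ends:
  assumes "unit_geodesic p q \<gamma>"
  shows "\<gamma> 0 = p" "\<gamma> (dist p q) = q"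
  using assms unfolding unit_geodesic_def by auto

lemma unit_geodesic_dist:
  assumes "unit_geodesic p q \<gamma>" "s \<in> {0..dist p q}" "t \<in> {0..dist p q}"
  shows "dist (\<gamma> s) (\<gamma> t) = \<bar>s - t\<bar>"
  using assms unfolding unit_geodesic_def by blast

lemma unit_geodesic_dist_ends:
  assumes g: "unit_geodesic p q \<gamma>" and "t \<in> {0..dist p q}"
  shows "dist p (\<gamma> t) = t" "dist (\<gamma> t) q = dist p q - t"
  using unit_geodesic_dist[OF g, of 0 t] unit_geodesic_dist[OF g, of t "dist p q"] assms
  by (auto simp: unit_geodesic_ends[OF g])

lemma unit_geodesic_continuous_on:
  assumes g: "unit_geodesic p q \<gamma>"
  shows "continuous_on {0..dist p q} \<gamma>"
  unfolding continuous_on_iff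
  using unit_geodesic_dist[OF g] by (metis dist_real_def)

lemma unit_geodesic_dist_lipschitz:
  assumes g: "unit_geodesic p q \<gamma>" and "s \<in> {0..dist p q}" "t \<in> {0..dist p q}"
  shows "\<bar>dist y (\<gamma> s) - dist y (\<gamma> t)\<bar> \<le> \<bar>s - t\<bar>"
  using dist_triangle[of y "\<gamma> s" "\<gamma> t"] dist_triangle[of y "\<gamma> t" "\<gamma> s"]
    unit_geodesic_dist[OF assms] by (auto simp: dist_commute)

section \<open>Convexity of distances along geodesics\<close>

lemma hadamard_geodesic_midpoint_ineq:
  assumes H: "hadamard TYPE('a::complete_space)" and g: "unit_geodesic p (q::'a) \<gamma>"
    and x: "x \<in> {0..dist p q}" and z: "z \<in> {0..dist p q}"
  shows "(dist y (\<gamma> ((x + z)/2)))\<^sup>2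
    \<le> (1/2) * (dist y (\<gamma> x))\<^sup>2 + (1/2) * (dist y (\<gamma> z))\<^sup>2 - (1/4) * (z - x)\<^sup>2"
proof -
  obtain w :: 'a where w: "\<And>y. (dist y w)\<^sup>2 \<le> (1/2) * (dist (\<gamma> x) y)\<^sup>2 + (1/2) * (dist (\<gamma> z) y)\<^sup>2
      - (1/4) * (dist (\<gamma> x) (\<gamma> z))\<^sup>2"
    using hadamard_midpointE[OF H] by blast
  have m: "(x + z)/2 \<in> {0..dist p q}" using x z by auto
  have "\<bar>x - (x + z)/2\<bar> = \<bar>z - x\<bar>/2" "\<bar>z - (x + z)/2\<bar> = \<bar>z - x\<bar>/2"
    by (auto simp: abs_if field_simps)
  then have dm: "dist (\<gamma> x) (\<gamma> ((x + z)/2)) = \<bar>z - x\<bar>/2" "dist (\<gamma> z) (\<gamma> ((x + z)/2)) = \<bar>z - x\<bar>/2"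
    using unit_geodesic_dist[OF g x m] unit_geodesic_dist[OF g z m] by simp_all
  have d: "(dist (\<gamma> x) (\<gamma> z))\<^sup>2 = (z - x)\<^sup>2"
    using unit_geodesic_dist[OF g x z] by (simp add: power2_commute)
  have "(dist (\<gamma> ((x + z)/2)) w)\<^sup>2 \<le> 0"
    using w[of "\<gamma> ((x + z)/2)"] unfolding dm d by (simp add: power_divide power2_abs)
  then have "w = \<gamma> ((x + z)/2)" by simp
  with w[of y] d show ?thesis by (simp add: dist_commute)
qed

lemma continuous_midpoint_convex_nonpos:
  fixes g :: "real \<Rightarrow> real"
  assumes c: "continuous_on {u..v} g" and uv: "u \<le> v"
    and mc: "\<And>x z. x \<in> {u..v} \<Longrightarrow> z \<in> {u..v} \<Longrightarrow> g ((x + z)/2) \<le> (g x + g z)/2"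
    and gu: "g u \<le> 0" and gv: "g v \<le> 0" and t: "t \<in> {u..v}"
  shows "g t \<le> 0"
proof (rule ccontr)
  assume "\<not> g t \<le> 0"
  obtain x0 where x0: "x0 \<in> {u..v}" "\<And>y. y \<in> {u..v} \<Longrightarrow> g y \<le> g x0"
    using continuous_attains_sup[OF compact_Icc _ c] uv by auto
  define M where "M = g x0"
  have M0: "M > 0" using x0(2)[OF t] \<open>\<not> g t \<le> 0\<close> M_def by simp
  \<comment> \<open>the leftmost maximiser is interior, and midpoint convexity around it fails\<close>
  define S where "S = {x \<in> {u..v}. g x = M}"
  have "closed S" unfolding S_def by (rule continuous_closed_preimage_constant[OF c]) simp
  moreover have "S \<noteq> {}" using x0 M_def S_def by auto
  moreover have Sb: "bdd_below S" unfolding S_def by (rule bdd_belowI[of _ u]) auto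
  ultimately have "Inf S \<in> S" by (rule closed_contains_Inf[rotated -1])
  then have t0: "Inf S \<in> {u..v}" "g (Inf S) = M" by (auto simp: S_def)
  then have ut0: "u < Inf S" "Inf S < v" using gu gv M0 by (auto simp: less_le)
  define d where "d = min (Inf S - u) (v - Inf S)"
  have d0: "d > 0" using ut0 d_def by simp
  have a: "Inf S - d \<in> {u..v}" "Inf S + d \<in> {u..v}" using ut0 d_def by auto
  have "g (Inf S - d) \<noteq> M"
    using cInf_lower[OF _ Sb, of "Inf S - d"] a d0 by (auto simp: S_def)
  then have "g (Inf S - d) < M" using x0(2)[OF a(1)] M_def by simp
  moreover have "g (Inf S + d) \<le> M" using x0(2)[OF a(2)] M_def by simp
  moreover have "g (((Inf S - d) + (Inf S + d))/2) \<le> (g (Inf S - d) + g (Inf S + d))/2"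
    by (rule mc[OF a])
  ultimately show False using t0(2) by simp
qed

lemma continuous_midpoint_convex_imp_convex_on:
  fixes f :: "real \<Rightarrow> real"
  assumes c: "continuous_on {a..b} f"
    and mc: "\<And>x z. x \<in> {a..b} \<Longrightarrow> z \<in> {a..b} \<Longrightarrow> f ((x + z)/2) \<le> (f x + f z)/2"
  shows "convex_on {a..b} f"
proof (rule convex_on_linorderI)
  fix t x y :: real
  assume t: "0 < t" "t < 1" and xy: "x \<in> {a..b}" "y \<in> {a..b}" "x < y"
  define k where "k = (f y - f x) / (y - x)"
  define chord where "chord s = f x + (s - x) * k" for s
  have chord_mid: "chord ((r + s)/2) = (chord r + chord s)/2" for r s
    unfolding chord_def by (simp add: field_simps)
  have sub: "{x..y} \<subseteq> {a..b}" using xy by auto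
  have "f ((1 - t) *\<^sub>R x + t *\<^sub>R y) - chord ((1 - t) *\<^sub>R x + t *\<^sub>R y) \<le> 0"
  proof (rule continuous_midpoint_convex_nonpos[where g = "\<lambda>s. f s - chord s"])
    show "continuous_on {x..y} (\<lambda>s. f s - chord s)"
      unfolding chord_def by (intro continuous_intros continuous_on_subset[OF c sub])
    show "f ((r + s)/2) - chord ((r + s)/2) \<le> (f r - chord r + (f s - chord s))/2"
      if "r \<in> {x..y}" "s \<in> {x..y}" for r s
      using mc[of r s] that sub chord_mid[of r s] by auto
    show "(1 - t) *\<^sub>R x + t *\<^sub>R y \<in> {x..y}"
      using t xy mult_right_mono[of t 1 "y - x"] mult_nonneg_nonneg[of t "y - x"]
      by (auto simp: algebra_simps)
  qed (use xy in \<open>auto simp: chord_def k_def\<close>)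
  moreover have "chord ((1 - t) *\<^sub>R x + t *\<^sub>R y) = (1 - t) * f x + t * f y"
    unfolding chord_def k_def using xy by (simp add: field_simps)
  ultimately show "f ((1 - t) *\<^sub>R x + t *\<^sub>R y) \<le> (1 - t) * f x + t * f y" by simp
qed simp

lemma hadamard_geodesic_sq_dist_convex:
  assumes H: "hadamard TYPE('a::complete_space)" and g: "unit_geodesic p (q::'a) \<gamma>"
  shows "convex_on {0..dist p q} (\<lambda>s. (dist y (\<gamma> s))\<^sup>2 - s\<^sup>2)"
proof (rule continuous_midpoint_convex_imp_convex_on)
  show "continuous_on {0..dist p q} (\<lambda>s. (dist y (\<gamma> s))\<^sup>2 - s\<^sup>2)"
    by (intro continuous_intros unit_geodesic_continuous_on[OF g])
  fix x z assume "x \<in> {0..dist p q}" "z \<in> {0..dist p q}"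
  then show "(dist y (\<gamma> ((x + z)/2)))\<^sup>2 - ((x + z)/2)\<^sup>2
      \<le> ((dist y (\<gamma> x))\<^sup>2 - x\<^sup>2 + ((dist y (\<gamma> z))\<^sup>2 - z\<^sup>2))/2"
    using hadamard_geodesic_midpoint_ineq[OF H g, of x z y] by (simp add: power2_eq_square field_simps)
qed

lemma hadamard_geodesic_dist_convex:
  assumes H: "hadamard TYPE('a::complete_space)" and g: "unit_geodesic p (q::'a) \<gamma>"
  shows "convex_on {0..dist p q} (\<lambda>s. dist y (\<gamma> s))"
proof (rule continuous_midpoint_convex_imp_convex_on)
  show "continuous_on {0..dist p q} (\<lambda>s. dist y (\<gamma> s))"
    by (intro continuous_intros unit_geodesic_continuous_on[OF g])
  fix x z assume xz: "x \<in> {0..dist p q}" "z \<in> {0..dist p q}"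
  have "(dist y (\<gamma> x) - dist y (\<gamma> z))\<^sup>2 \<le> (z - x)\<^sup>2"
    using unit_geodesic_dist_lipschitz[OF g xz, of y] by (simp add: abs_le_square_iff power2_commute)
  then have "(dist y (\<gamma> ((x + z)/2)))\<^sup>2 \<le> ((dist y (\<gamma> x) + dist y (\<gamma> z))/2)\<^sup>2"
    using hadamard_geodesic_midpoint_ineq[OF H g xz, of y]
    by (simp add: power2_eq_square field_simps)
  then show "dist y (\<gamma> ((x + z)/2)) \<le> (dist y (\<gamma> x) + dist y (\<gamma> z))/2"
    by (rule power2_le_imp_le) simp
qed

text \<open>The law of cosines in the comparison triangle, as an upper bound.\<close>
lemma hadamard_geodesic_comparison:
  assumes H: "hadamard TYPE('a::complete_space)" and g: "unit_geodesic p (q::'a) \<gamma>"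
    and L: "0 < dist p q" and t: "t \<in> {0..dist p q}"
  shows "(dist y (\<gamma> t))\<^sup>2
    \<le> (dist y p)\<^sup>2 + t * ((dist y q)\<^sup>2 - (dist y p)\<^sup>2 - (dist p q)\<^sup>2) / dist p q + t\<^sup>2"
  using convex_onD_Icc'[OF hadamard_geodesic_sq_dist_convex[OF H g, of y] t] L
  by (simp add: unit_geodesic_ends[OF g] field_simps)

section \<open>One-sided derivatives along geodesics\<close>

lemma convex_on_right_slope_tendsto:
  fixes f :: "real \<Rightarrow> real"
  assumes f: "convex_on {a..b} f" and ab: "a < b"
    and bdd: "\<And>s. s \<in> {a<..b} \<Longrightarrow> B \<le> (f s - f a) / (s - a)"
  shows "((\<lambda>s. (f s - f a) / (s - a)) \<longlongrightarrow> right_deriv f a) (at_right a)"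
    and "\<And>s. s \<in> {a<..b} \<Longrightarrow> right_deriv f a \<le> (f s - f a) / (s - a)"
proof -
  define \<phi> where "\<phi> s = (f s - f a) / (s - a)" for s
  have mono: "\<phi> t \<le> \<phi> s" if "a < t" "t \<le> s" "s \<le> b" for s t
  proof (cases "t = s")
    case False
    have "(f a - f u) / (a - u) = \<phi> u" for u
      unfolding \<phi>_def by (metis minus_diff_eq minus_divide_divide)
    with convex_on_slope_le(1)[OF f, of a s t] that False ab show ?thesis by simp
  qed simp
  have bb: "bdd_below (\<phi> ` {a<..b})" using bdd unfolding \<phi>_def by (rule bdd_belowI2)
  have lower: "Inf (\<phi> ` {a<..b}) \<le> \<phi> s" if "s \<in> {a<..b}" for s
    using cInf_lower[OF _ bb] that by simp
  have lim: "(\<phi> \<longlongrightarrow> Inf (\<phi> ` {a<..b})) (at_right a)"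
  proof (rule order_tendstoI)
    fix c assume c: "c < Inf (\<phi> ` {a<..b})"
    show "\<forall>\<^sub>F s in at_right a. c < \<phi> s"
    proof (rule eventually_mono[OF eventually_at_right_real[OF ab]])
      fix s assume "s \<in> {a<..<b}"
      with lower[of s] c show "c < \<phi> s" by auto
    qed
  next
    fix c assume "Inf (\<phi> ` {a<..b}) < c"
    then obtain s0 where s0: "s0 \<in> {a<..b}" "\<phi> s0 < c"
      using cInf_less_iff[OF _ bb] ab by auto
    show "\<forall>\<^sub>F s in at_right a. \<phi> s < c"
      using eventually_at_right_real[of a s0] s0 mono[of _ s0]
      by (auto elim!: eventually_mono) (meson le_less_trans less_imp_le)
  qed
  then have "right_deriv f a = Inf (\<phi> ` {a<..b})"
    unfolding right_deriv_def \<phi>_def by (intro tendsto_Lim) simp_all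
  with lim lower show "(\<phi> \<longlongrightarrow> right_deriv f a) (at_right a)"
    and "\<And>s. s \<in> {a<..b} \<Longrightarrow> right_deriv f a \<le> \<phi> s" by simp_all
qed

lemma convex_on_left_slope_tendsto:
  fixes f :: "real \<Rightarrow> real"
  assumes f: "convex_on {a..b} f" and ab: "a < b"
    and bdd: "\<And>s. s \<in> {a..<b} \<Longrightarrow> (f s - f b) / (s - b) \<le> B"
  shows "((\<lambda>s. (f s - f b) / (s - b)) \<longlongrightarrow> left_deriv f b) (at_left b)"
    and "\<And>s. s \<in> {a..<b} \<Longrightarrow> (f s - f b) / (s - b) \<le> left_deriv f b"
proof -
  define \<psi> where "\<psi> s = (f s - f b) / (s - b)" for s
  have mono: "\<psi> s \<le> \<psi> t" if "a \<le> s" "s \<le> t" "t < b" for s t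
    using convex_on_slope_le(2)[OF f, of s b t] that by (cases "s = t") (auto simp: \<psi>_def)
  have bb: "bdd_above (\<psi> ` {a..<b})" using bdd unfolding \<psi>_def by (rule bdd_aboveI2)
  have upper: "\<psi> s \<le> Sup (\<psi> ` {a..<b})" if "s \<in> {a..<b}" for s
    using cSup_upper[OF _ bb] that by simp
  have lim: "(\<psi> \<longlongrightarrow> Sup (\<psi> ` {a..<b})) (at_left b)"
  proof (rule order_tendstoI)
    fix c assume "c < Sup (\<psi> ` {a..<b})"
    then obtain s0 where s0: "s0 \<in> {a..<b}" "c < \<psi> s0"
      using less_cSup_iff[OF _ bb] ab by auto
    show "\<forall>\<^sub>F s in at_left b. c < \<psi> s"
      using eventually_at_left_real[of s0 b] s0 mono[of s0]
      by (auto elim!: eventually_mono) (meson less_le_trans less_imp_le)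
  next
    fix c assume c: "Sup (\<psi> ` {a..<b}) < c"
    show "\<forall>\<^sub>F s in at_left b. \<psi> s < c"
    proof (rule eventually_mono[OF eventually_at_left_real[OF ab]])
      fix s assume "s \<in> {a<..<b}"
      with upper[of s] c show "\<psi> s < c" by auto
    qed
  qed
  then have "left_deriv f b = Sup (\<psi> ` {a..<b})"
    unfolding left_deriv_def \<psi>_def by (intro tendsto_Lim) simp_all
  with lim upper show "(\<psi> \<longlongrightarrow> left_deriv f b) (at_left b)"
    and "\<And>s. s \<in> {a..<b} \<Longrightarrow> \<psi> s \<le> left_deriv f b" by simp_all
qed

lemma hadamard_geodesic_right_deriv:
  assumes H: "hadamard TYPE('a::complete_space)" and g: "unit_geodesic p (q::'a) \<gamma>"
    and L: "0 < dist p q"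
  shows "((\<lambda>s. (dist y (\<gamma> s) - dist y p) / s) \<longlongrightarrow> right_deriv (\<lambda>s. dist y (\<gamma> s)) 0) (at_right 0)"
    and "\<And>s. s \<in> {0<..dist p q} \<Longrightarrow> right_deriv (\<lambda>s. dist y (\<gamma> s)) 0 \<le> (dist y (\<gamma> s) - dist y p) / s"
proof -
  have "-1 \<le> (dist y (\<gamma> s) - dist y (\<gamma> 0)) / (s - 0)" if "s \<in> {0<..dist p q}" for s
    using unit_geodesic_dist_lipschitz[OF g, of s 0 y] that by (auto simp: divide_simps)
  from convex_on_right_slope_tendsto[OF hadamard_geodesic_dist_convex[OF H g] L this]
  show "((\<lambda>s. (dist y (\<gamma> s) - dist y p) / s) \<longlongrightarrow> right_deriv (\<lambda>s. dist y (\<gamma> s)) 0) (at_right 0)"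
    and "\<And>s. s \<in> {0<..dist p q} \<Longrightarrow> right_deriv (\<lambda>s. dist y (\<gamma> s)) 0 \<le> (dist y (\<gamma> s) - dist y p) / s"
    by (simp_all add: unit_geodesic_ends[OF g])
qed

lemma hadamard_geodesic_left_deriv:
  assumes H: "hadamard TYPE('a::complete_space)" and g: "unit_geodesic p (q::'a) \<gamma>"
    and L: "0 < dist p q"
  shows "((\<lambda>s. (dist y (\<gamma> s) - dist y q) / (s - dist p q))
      \<longlongrightarrow> left_deriv (\<lambda>s. dist y (\<gamma> s)) (dist p q)) (at_left (dist p q))"
    and "\<And>s. s \<in> {0..<dist p q} \<Longrightarrow>
      (dist y (\<gamma> s) - dist y q) / (s - dist p q) \<le> left_deriv (\<lambda>s. dist y (\<gamma> s)) (dist p q)"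
proof -
  have "(dist y (\<gamma> s) - dist y (\<gamma> (dist p q))) / (s - dist p q) \<le> 1" if "s \<in> {0..<dist p q}" for s
    using unit_geodesic_dist_lipschitz[OF g, of s "dist p q" y] that by (auto simp: divide_simps)
  from convex_on_left_slope_tendsto[OF hadamard_geodesic_dist_convex[OF H g] L this]
  show "((\<lambda>s. (dist y (\<gamma> s) - dist y q) / (s - dist p q))
      \<longlongrightarrow> left_deriv (\<lambda>s. dist y (\<gamma> s)) (dist p q)) (at_left (dist p q))"
    and "\<And>s. s \<in> {0..<dist p q} \<Longrightarrow>
      (dist y (\<gamma> s) - dist y q) / (s - dist p q) \<le> left_deriv (\<lambda>s. dist y (\<gamma> s)) (dist p q)"
    by (simp_all add: unit_geodesic_ends[OF g])
qed

section \<open>The comparison triangle and the bowtie\<close>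

lemma cosine_ge_minus_one:
  fixes a b L :: real
  assumes "0 < a" "0 < L" "\<bar>a - L\<bar> \<le> b"
  shows "-1 \<le> (b\<^sup>2 - a\<^sup>2 - L\<^sup>2) / (2 * a * L)"
proof -
  have "(a - L)\<^sup>2 \<le> b\<^sup>2" using assms by (metis abs_le_square_iff abs_of_nonneg abs_ge_zero order.trans)
  with assms show ?thesis by (simp add: le_divide_eq power2_eq_square algebra_simps)
qed

lemma cosine_comparison_slope_le:
  fixes a t c F :: real
  assumes a: "0 < a" and t: "0 < t" "t \<le> a" and c: "-1 \<le> c" and F: "0 \<le> F"
    and cmp: "F\<^sup>2 \<le> a\<^sup>2 + 2 * a * t * c + t\<^sup>2"
  shows "(F - a) / t \<le> c + t / (2 * a)"
proof -
  define Y where "Y = t * c + t\<^sup>2 / (2 * a)"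
  have "-t \<le> t * c" using c t mult_left_mono[of "-1" c t] by simp
  moreover have "0 \<le> t\<^sup>2 / (2 * a)" using a by simp
  ultimately have Y: "0 \<le> a + Y" unfolding Y_def using t by linarith
  have "(a + Y)\<^sup>2 = a\<^sup>2 + 2 * a * t * c + t\<^sup>2 + Y\<^sup>2"
    unfolding Y_def using a by (simp add: power2_eq_square field_simps)
  then have "F\<^sup>2 \<le> (a + Y)\<^sup>2" using cmp zero_le_power2[of Y] by linarith
  then have "F - a \<le> t * (c + t / (2 * a))"
    using power2_le_imp_le[OF _ Y] unfolding Y_def by (simp add: power2_eq_square algebra_simps)
  then show ?thesis using t by (simp add: pos_divide_le_eq mult.commute)
qed

text \<open>In a triangle with sides \<open>a, b, L\<close> the two sides of the inequality are minus the cosine of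
  the angle between \<open>a\<close> and \<open>L\<close> and the cosine of the angle between \<open>b\<close> and \<open>L\<close>.\<close>
lemma comparison_cosines_le:
  fixes a b L :: real
  assumes "0 < a" "0 < b" "0 < L" "\<bar>a - b\<bar> \<le> L"
  shows "(b\<^sup>2 - a\<^sup>2 - L\<^sup>2) / (2 * a * L) \<le> (b\<^sup>2 + L\<^sup>2 - a\<^sup>2) / (2 * b * L)"
proof -
  have "(a - b)\<^sup>2 \<le> L\<^sup>2" using assms by (metis abs_le_square_iff abs_of_pos)
  then have "0 \<le> (a + b) * (L\<^sup>2 - (a - b)\<^sup>2)" using assms by simp
  also have "(a + b) * (L\<^sup>2 - (a - b)\<^sup>2) = a * (b\<^sup>2 + L\<^sup>2 - a\<^sup>2) - b * (b\<^sup>2 - a\<^sup>2 - L\<^sup>2)"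
    by (simp add: power2_eq_square algebra_simps)
  finally have "b * (b\<^sup>2 - a\<^sup>2 - L\<^sup>2) / (2 * a * b * L) \<le> a * (b\<^sup>2 + L\<^sup>2 - a\<^sup>2) / (2 * a * b * L)"
    using assms by (intro divide_right_mono) auto
  then show ?thesis using assms by simp
qed

lemma law_of_cosines_gap:
  fixes a b L c \<eta> :: real
  assumes a: "0 < a" and b: "0 < b" and L: "0 < L"
    and cos: "b\<^sup>2 = a\<^sup>2 + 2 * a * L * c + L\<^sup>2" and \<eta>: "0 < \<eta>" "c\<^sup>2 \<le> 1 - \<eta>\<^sup>2"
  shows "(1/2) * \<eta>\<^sup>2 * L\<^sup>2 * (1 / max a b) \<le> b - a - L * c"
proof -
  have prod: "(b - a - L * c) * (b + a + L * c) = L\<^sup>2 * (1 - c\<^sup>2)"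
    using cos by (simp add: power2_eq_square algebra_simps)
  have "L\<^sup>2 * \<eta>\<^sup>2 \<le> L\<^sup>2 * (1 - c\<^sup>2)" using \<eta> by (intro mult_left_mono) auto
  moreover have "0 < L\<^sup>2 * \<eta>\<^sup>2" using L \<eta> by simp
  ultimately have pos: "0 < (b - a - L * c) * (b + a + L * c)" using prod by linarith
  then have "(a + L * c)\<^sup>2 < b\<^sup>2" by (simp add: power2_eq_square algebra_simps)
  then have "\<bar>a + L * c\<bar> < b" using b power_less_imp_less_base[of "\<bar>a + L * c\<bar>" 2 b] by simp
  then have S: "0 < b + a + L * c" "b + a + L * c \<le> 2 * max a b" by auto
  with pos have D: "0 < b - a - L * c" by (simp add: zero_less_mult_iff)
  have "L\<^sup>2 * \<eta>\<^sup>2 \<le> (b - a - L * c) * (2 * max a b)"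
    using \<open>L\<^sup>2 * \<eta>\<^sup>2 \<le> _\<close> prod mult_left_mono[OF S(2), of "b - a - L * c"] D by linarith
  then show ?thesis using a b by (simp add: field_simps max_def split: if_splits)
qed

lemma hadamard_geodesic_right_deriv_le_cosine:
  assumes H: "hadamard TYPE('a::complete_space)" and g: "unit_geodesic p (q::'a) \<gamma>"
    and L: "0 < dist p q" and y: "y \<noteq> p"
  shows "right_deriv (\<lambda>s. dist y (\<gamma> s)) 0
    \<le> ((dist y q)\<^sup>2 - (dist y p)\<^sup>2 - (dist p q)\<^sup>2) / (2 * dist y p * dist p q)"
proof -
  define a b where "a = dist y p" and "b = dist y q"
  define c where "c = (b\<^sup>2 - a\<^sup>2 - (dist p q)\<^sup>2) / (2 * a * dist p q)"
  have a: "0 < a" using y unfolding a_def by simp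
  have "\<bar>a - dist p q\<bar> \<le> b"
    using dist_triangle[of y p q] dist_triangle[of p q y] unfolding a_def b_def
    by (auto simp: dist_commute)
  then have c: "-1 \<le> c" unfolding c_def by (rule cosine_ge_minus_one[OF a L])
  have "0 < min a (dist p q)" using a L by simp
  from eventually_at_right_real[OF this]
  have "\<forall>\<^sub>F s in at_right 0. (dist y (\<gamma> s) - a) / s \<le> c + s / (2 * a)"
  proof eventually_elim
    case (elim s)
    have "2 * a * s * c = s * (b\<^sup>2 - a\<^sup>2 - (dist p q)\<^sup>2) / dist p q"
      using a L unfolding c_def by (simp add: field_simps)
    with elim have "(dist y (\<gamma> s))\<^sup>2 \<le> a\<^sup>2 + 2 * a * s * c + s\<^sup>2"
      using hadamard_geodesic_comparison[OF H g L, of s y]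
      unfolding a_def[symmetric] b_def[symmetric] by simp
    with elim show ?case using cosine_comparison_slope_le[OF a _ _ c] by simp
  qed
  moreover have "((\<lambda>s. c + s / (2 * a)) \<longlongrightarrow> c) (at_right 0)"
    using a by (auto intro!: tendsto_eq_intros)
  ultimately show ?thesis
    using tendsto_le[OF _ _ hadamard_geodesic_right_deriv(1)[OF H g L, of y]]
    unfolding a_def b_def c_def by simp
qed

lemma hadamard_geodesic_left_deriv_ge_cosine:
  assumes H: "hadamard TYPE('a::complete_space)" and g: "unit_geodesic p (q::'a) \<gamma>"
    and L: "0 < dist p q" and y: "y \<noteq> q"
  shows "((dist y q)\<^sup>2 + (dist p q)\<^sup>2 - (dist y p)\<^sup>2) / (2 * dist y q * dist p q)
    \<le> left_deriv (\<lambda>s. dist y (\<gamma> s)) (dist p q)"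
proof -
  define a b where "a = dist y p" and "b = dist y q"
  define c where "c = (a\<^sup>2 - b\<^sup>2 - (dist p q)\<^sup>2) / (2 * b * dist p q)"
  have b: "0 < b" using y unfolding b_def by simp
  have "\<bar>b - dist p q\<bar> \<le> a"
    using dist_triangle[of y q p] dist_triangle[of p q y] unfolding a_def b_def
    by (auto simp: dist_commute)
  then have c: "-1 \<le> c" unfolding c_def by (rule cosine_ge_minus_one[OF b L])
  \<comment> \<open>the same estimate as for the right derivative, read from the end \<open>q\<close> with \<open>t = dist p q - s\<close>\<close>
  have "dist p q - min b (dist p q) < dist p q" using b L by simp
  from eventually_at_left_real[OF this]
  have "\<forall>\<^sub>F s in at_left (dist p q). - c - (dist p q - s) / (2 * b)
      \<le> (dist y (\<gamma> s) - b) / (s - dist p q)"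
  proof eventually_elim
    case (elim s)
    have "a\<^sup>2 + s * (b\<^sup>2 - a\<^sup>2 - (dist p q)\<^sup>2) / dist p q + s\<^sup>2
        = b\<^sup>2 + 2 * b * (dist p q - s) * c + (dist p q - s)\<^sup>2"
      using b L unfolding c_def by (simp add: field_simps power2_eq_square)
    moreover have "0 < s" using elim min.cobounded2[of b "dist p q"] by auto
    ultimately have "(dist y (\<gamma> s))\<^sup>2 \<le> b\<^sup>2 + 2 * b * (dist p q - s) * c + (dist p q - s)\<^sup>2"
      using hadamard_geodesic_comparison[OF H g L, of s y] elim
      unfolding a_def[symmetric] b_def[symmetric] by simp
    moreover have "0 < dist p q - s" "dist p q - s \<le> b"
      using elim min.cobounded1[of b "dist p q"] by auto
    ultimately have "(dist y (\<gamma> s) - b) / (dist p q - s) \<le> c + (dist p q - s) / (2 * b)"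
      by (intro cosine_comparison_slope_le[OF b _ _ c]) auto
    moreover have "(dist y (\<gamma> s) - b) / (s - dist p q) = - ((dist y (\<gamma> s) - b) / (dist p q - s))"
      by (metis minus_diff_eq divide_minus_right)
    ultimately show ?case by linarith
  qed
  moreover have "((\<lambda>s. - c - (dist p q - s) / (2 * b)) \<longlongrightarrow> - c) (at_left (dist p q))"
    using b by (auto intro!: tendsto_eq_intros)
  ultimately have "- c \<le> left_deriv (\<lambda>s. dist y (\<gamma> s)) (dist p q)"
    using tendsto_le[OF _ hadamard_geodesic_left_deriv(1)[OF H g L, of y]]
    unfolding b_def by simp
  moreover have "- c = (b\<^sup>2 + (dist p q)\<^sup>2 - a\<^sup>2) / (2 * b * dist p q)"
    using b L unfolding c_def by (simp add: field_simps)
  ultimately show ?thesis unfolding a_def b_def by simp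
qed

lemma hadamard_geodesic_right_deriv_start:
  assumes H: "hadamard TYPE('a::complete_space)" and g: "unit_geodesic p (q::'a) \<gamma>"
    and L: "0 < dist p q"
  shows "right_deriv (\<lambda>s. dist p (\<gamma> s)) 0 = 1"
proof (rule tendsto_unique[OF _ hadamard_geodesic_right_deriv(1)[OF H g L]])
  show "((\<lambda>s. (dist p (\<gamma> s) - dist p p) / s) \<longlongrightarrow> 1) (at_right 0)"
    using eventually_at_right_real[OF L]
    by (rule tendsto_eventually[OF eventually_mono]) (simp add: unit_geodesic_dist_ends(1)[OF g])
qed simp

lemma hadamard_geodesic_left_deriv_end:
  assumes H: "hadamard TYPE('a::complete_space)" and g: "unit_geodesic p (q::'a) \<gamma>"
    and L: "0 < dist p q"
  shows "left_deriv (\<lambda>s. dist q (\<gamma> s)) (dist p q) = -1"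
proof (rule tendsto_unique[OF _ hadamard_geodesic_left_deriv(1)[OF H g L]])
  show "((\<lambda>s. (dist q (\<gamma> s) - dist q q) / (s - dist p q)) \<longlongrightarrow> -1) (at_left (dist p q))"
    using eventually_at_left_real[OF L]
    by (rule tendsto_eventually[OF eventually_mono])
      (simp add: dist_commute[of q] unit_geodesic_dist_ends(2)[OF g] divide_eq_minus_1_iff)
qed simp

lemma square_le_of_between:
  fixes u c w k :: real
  assumes "u \<le> c" "c \<le> w" "u\<^sup>2 \<le> k" "w\<^sup>2 \<le> k"
  shows "c\<^sup>2 \<le> k"
proof (cases "0 \<le> c")
  case True
  with assms have "c\<^sup>2 \<le> w\<^sup>2" by (intro power_mono) auto
  with assms show ?thesis by simp
next
  case False
  with assms have "(- c)\<^sup>2 \<le> (- u)\<^sup>2" by (intro power_mono) auto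
  with assms show ?thesis by simp
qed

lemma hadamard_right_deriv_dist_along_le:
  fixes p q y :: "'a::complete_space"
  assumes H: "hadamard TYPE('a)" and pq: "p \<noteq> q"
  shows "dist p q * right_deriv (dist_along p q y) 0 \<le> dist y q - dist y p"
proof -
  have g: "unit_geodesic p q (geod p q)" by (rule unit_geodesic_geod[OF H])
  have L: "0 < dist p q" using pq by simp
  have "right_deriv (dist_along p q y) 0 \<le> (dist y q - dist y p) / dist p q"
    using hadamard_geodesic_right_deriv(2)[OF H g L, of "dist p q" y] L
    unfolding dist_along_def[abs_def] by (simp add: unit_geodesic_ends[OF g])
  with L show ?thesis by (simp add: field_simps)
qed

lemma hadamard_bowtie_gap:
  fixes p q y :: "'a::complete_space"
  assumes H: "hadamard TYPE('a)" and pq: "p \<noteq> q" and \<eta>: "0 < \<eta>"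
    and y: "y \<in> bowtie_compl p q \<eta>"
  shows "(1/2) * \<eta>\<^sup>2 * (dist p q)\<^sup>2 * (1 / max (dist y p) (dist y q))
    \<le> dist y q - dist y p - dist p q * right_deriv (dist_along p q y) 0"
proof -
  define \<gamma> where "\<gamma> = geod p q"
  have g: "unit_geodesic p q \<gamma>" unfolding \<gamma>_def by (rule unit_geodesic_geod[OF H])
  have L: "0 < dist p q" using pq by simp
  define u w where "u = right_deriv (\<lambda>s. dist y (\<gamma> s)) 0"
    and "w = left_deriv (\<lambda>s. dist y (\<gamma> s)) (dist p q)"
  have u_eq: "right_deriv (dist_along p q y) 0 = u"
    unfolding u_def \<gamma>_def dist_along_def[abs_def] ..
  have uw: "u\<^sup>2 \<le> 1 - \<eta>\<^sup>2" "w\<^sup>2 \<le> 1 - \<eta>\<^sup>2"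
    using y unfolding bowtie_compl_def dist_along_def[abs_def] u_def w_def \<gamma>_def
    by (auto simp: dist_commute)
  then have "y \<noteq> p" "y \<noteq> q"
    using \<eta> hadamard_geodesic_right_deriv_start[OF H g L] hadamard_geodesic_left_deriv_end[OF H g L]
    unfolding u_def w_def by auto
  define a b c where "a = dist y p" and "b = dist y q"
    and "c = ((dist y q)\<^sup>2 - (dist y p)\<^sup>2 - (dist p q)\<^sup>2) / (2 * dist y p * dist p q)"
  have ab: "0 < a" "0 < b" using \<open>y \<noteq> p\<close> \<open>y \<noteq> q\<close> unfolding a_def b_def by auto
  have "\<bar>a - b\<bar> \<le> dist p q"
    using dist_triangle[of y p q] dist_triangle[of y q p] unfolding a_def b_def
    by (auto simp: dist_commute)
  have "u \<le> c"
    unfolding u_def c_def by (rule hadamard_geodesic_right_deriv_le_cosine[OF H g L \<open>y \<noteq> p\<close>])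
  moreover have "c \<le> w"
    using comparison_cosines_le[OF ab L \<open>\<bar>a - b\<bar> \<le> _\<close>]
      hadamard_geodesic_left_deriv_ge_cosine[OF H g L \<open>y \<noteq> q\<close>]
    unfolding a_def b_def c_def w_def by linarith
  ultimately have "c\<^sup>2 \<le> 1 - \<eta>\<^sup>2" using uw by (rule square_le_of_between)
  moreover have "b\<^sup>2 = a\<^sup>2 + 2 * a * dist p q * c + (dist p q)\<^sup>2"
    using ab L unfolding c_def a_def[symmetric] b_def[symmetric] by (simp add: field_simps)
  ultimately have "(1/2) * \<eta>\<^sup>2 * (dist p q)\<^sup>2 * (1 / max a b) \<le> b - a - dist p q * c"
    by (intro law_of_cosines_gap[OF ab L _ \<eta>])
  moreover have "dist p q * u \<le> dist p q * c" using \<open>u \<le> c\<close> L by simp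
  ultimately show ?thesis unfolding u_eq a_def b_def by simp
qed

lemma hadamard_bowtie_first_variation:
  fixes p q y :: "'a::complete_space"
  assumes H: "hadamard TYPE('a)" and pq: "p \<noteq> q" and \<eta>: "0 < \<eta>"
  shows "dist p q * right_deriv (dist_along p q y) 0
      + (1/2) * \<eta>\<^sup>2 * (dist p q)\<^sup>2 * ((1 / max (dist y p) (dist y q)) * indicator (bowtie_compl p q \<eta>) y)
    \<le> dist y q - dist y p"
  using hadamard_right_deriv_dist_along_le[OF H pq, of y] hadamard_bowtie_gap[OF H pq \<eta>, of y]
  by (cases "y \<in> bowtie_compl p q \<eta>") simp_all

section \<open>Frechet medians\<close>

text \<open>The space need not be second countable, so \<open>borel_measurable_dist\<close> does not apply.\<close>
lemma borel_measurable_dist_const: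
  fixes Y :: "'s \<Rightarrow> 'a::metric_space"
  assumes "Y \<in> borel_measurable M"
  shows "(\<lambda>\<omega>. dist (Y \<omega>) x) \<in> borel_measurable M"
proof -
  have "(\<lambda>z. dist z x) \<in> borel_measurable borel"
    by (rule borel_measurable_continuous_onI) (intro continuous_intros)
  from measurable_compose[OF assms this] show ?thesis by (simp add: o_def)
qed

lemma integrable_dist_diff:
  fixes Y :: "'s \<Rightarrow> 'a::metric_space"
  assumes "finite_measure M" and "Y \<in> borel_measurable M"
  shows "integrable M (\<lambda>\<omega>. dist (Y \<omega>) x - dist (Y \<omega>) z)"
proof (rule finite_measure.integrable_const_bound[OF assms(1), where B = "dist x z"])
  show "AE \<omega> in M. norm (dist (Y \<omega>) x - dist (Y \<omega>) z) \<le> dist x z"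
  proof (rule AE_I2)
    fix \<omega>
    show "norm (dist (Y \<omega>) x - dist (Y \<omega>) z) \<le> dist x z"
      using dist_triangle[of "Y \<omega>" x z] dist_triangle[of "Y \<omega>" z x] by (simp add: dist_commute abs_le_iff)
  qed
  show "(\<lambda>\<omega>. dist (Y \<omega>) x - dist (Y \<omega>) z) \<in> borel_measurable M"
    using borel_measurable_dist_const[OF assms(2)] by measurable
qed

lemma frechet_median_excess_nonneg:
  fixes Y :: "'s \<Rightarrow> 'a::metric_space"
  assumes "prob_space M" and Y: "Y \<in> borel_measurable M"
    and min: "\<forall>x. prob_space.expectation M (\<lambda>\<omega>. dist (Y \<omega>) m - dist (Y \<omega>) y\<^sub>0)
                 \<le> prob_space.expectation M (\<lambda>\<omega>. dist (Y \<omega>) x - dist (Y \<omega>) y\<^sub>0)"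
  shows "0 \<le> prob_space.expectation M (\<lambda>\<omega>. dist (Y \<omega>) x - dist (Y \<omega>) m)"
proof -
  interpret prob_space M by fact
  have "expectation (\<lambda>\<omega>. dist (Y \<omega>) x - dist (Y \<omega>) m)
      = expectation (\<lambda>\<omega>. (dist (Y \<omega>) x - dist (Y \<omega>) y\<^sub>0) - (dist (Y \<omega>) m - dist (Y \<omega>) y\<^sub>0))"
    by simp
  also have "\<dots> = expectation (\<lambda>\<omega>. dist (Y \<omega>) x - dist (Y \<omega>) y\<^sub>0)
      - expectation (\<lambda>\<omega>. dist (Y \<omega>) m - dist (Y \<omega>) y\<^sub>0)"
    by (intro Bochner_Integration.integral_diff integrable_dist_diff[OF finite_measure_axioms Y])
  finally show ?thesis using min by simp
qed

lemma frechet_median_right_deriv_nonneg: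
  fixes Y :: "'s \<Rightarrow> 'a::complete_space"
  assumes H: "hadamard TYPE('a)" and "prob_space M" and Y: "Y \<in> borel_measurable M"
    and min: "\<forall>x. prob_space.expectation M (\<lambda>\<omega>. dist (Y \<omega>) m - dist (Y \<omega>) y\<^sub>0)
                 \<le> prob_space.expectation M (\<lambda>\<omega>. dist (Y \<omega>) x - dist (Y \<omega>) y\<^sub>0)"
    and mq: "m \<noteq> q"
  shows "integrable M (\<lambda>\<omega>. right_deriv (dist_along m q (Y \<omega>)) 0)"
    and "0 \<le> prob_space.expectation M (\<lambda>\<omega>. right_deriv (dist_along m q (Y \<omega>)) 0)"
proof -
  interpret prob_space M by fact
  define \<gamma> where "\<gamma> = geod m q"
  have g: "unit_geodesic m q \<gamma>" unfolding \<gamma>_def by (rule unit_geodesic_geod[OF H])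
  have L: "0 < dist m q" using mq by simp
  define U where "U \<omega> = right_deriv (dist_along m q (Y \<omega>)) 0" for \<omega>
  define t where "t n = dist m q / Suc n" for n
  define Q where "Q n \<omega> = (dist (Y \<omega>) (\<gamma> (t n)) - dist (Y \<omega>) m) / t n" for n \<omega>
  have t: "t n \<in> {0<..dist m q}" for n
    using L unfolding t_def by (auto simp: divide_le_eq)
  have "filterlim t (at_right 0) sequentially"
    unfolding t_def using L
    by (intro tendsto_imp_filterlim_at_right LIMSEQ_Suc[OF lim_const_over_n]) auto
  then have Q_lim: "(\<lambda>n. Q n \<omega>) \<longlonglongrightarrow> U \<omega>" for \<omega>
    using filterlim_compose[OF hadamard_geodesic_right_deriv(1)[OF H g L]]
    unfolding Q_def U_def \<gamma>_def dist_along_def[abs_def] by blast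
  have Q_bound: "norm (Q n \<omega>) \<le> 1" for n \<omega>
    using unit_geodesic_dist_lipschitz[OF g, of "t n" 0 "Y \<omega>"] t[of n]
    by (simp add: Q_def unit_geodesic_ends[OF g] abs_divide divide_le_eq)
  have Q_meas: "Q n \<in> borel_measurable M" for n
    unfolding Q_def using borel_measurable_dist_const[OF Y] by measurable
  have U_meas: "U \<in> borel_measurable M" by (rule borel_measurable_LIMSEQ_real[OF Q_lim Q_meas])
  show "integrable M U"
    by (rule integrable_dominated_convergence[where s = Q and w = "\<lambda>_. 1", OF U_meas Q_meas]) (use Q_lim Q_bound in auto)
  have "(\<lambda>n. expectation (Q n)) \<longlonglongrightarrow> expectation U"
    by (rule integral_dominated_convergence[where s = Q and w = "\<lambda>_. 1", OF U_meas Q_meas]) (use Q_lim Q_bound in auto)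
  moreover have "0 \<le> expectation (Q n)" for n
    using frechet_median_excess_nonneg[OF \<open>prob_space M\<close> Y min, of "\<gamma> (t n)"] t[of n]
    unfolding Q_def by simp
  ultimately show "0 \<le> expectation U"
    using LIMSEQ_le_const[of "\<lambda>n. expectation (Q n)" "expectation U" 0] by blast
qed

lemma frechet_median_bowtie_bound:
  fixes Y :: "'s \<Rightarrow> 'a::complete_space"
  assumes H: "hadamard TYPE('a)" and "prob_space M" and Y: "Y \<in> borel_measurable M"
    and min: "\<forall>x. prob_space.expectation M (\<lambda>\<omega>. dist (Y \<omega>) m - dist (Y \<omega>) y\<^sub>0)
                 \<le> prob_space.expectation M (\<lambda>\<omega>. dist (Y \<omega>) x - dist (Y \<omega>) y\<^sub>0)"
    and mq: "m \<noteq> q" and \<eta>: "0 < \<eta>"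
    and int: "integrable M (\<lambda>\<omega>. (1 / max (dist (Y \<omega>) m) (dist (Y \<omega>) q)) * indicator (bowtie_compl m q \<eta>) (Y \<omega>))"
  shows "(1/2) * \<eta>\<^sup>2 * (dist m q)\<^sup>2 *
      prob_space.expectation M (\<lambda>\<omega>. (1 / max (dist (Y \<omega>) m) (dist (Y \<omega>) q)) * indicator (bowtie_compl m q \<eta>) (Y \<omega>))
    \<le> prob_space.expectation M (\<lambda>\<omega>. dist (Y \<omega>) q - dist (Y \<omega>) m)"
proof -
  interpret prob_space M by fact
  define \<psi> where "\<psi> = (\<lambda>\<omega>. (1 / max (dist (Y \<omega>) m) (dist (Y \<omega>) q)) * indicator (bowtie_compl m q \<eta>) (Y \<omega>))"
  have \<psi>: "integrable M \<psi>" using int unfolding \<psi>_def .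
  define U where "U \<omega> = right_deriv (dist_along m q (Y \<omega>)) 0" for \<omega>
  have U: "integrable M U" "0 \<le> expectation U"
    using frechet_median_right_deriv_nonneg[OF H \<open>prob_space M\<close> Y min mq] unfolding U_def by auto
  have "dist m q * U \<omega> + (1/2) * \<eta>\<^sup>2 * (dist m q)\<^sup>2 * \<psi> \<omega> \<le> dist (Y \<omega>) q - dist (Y \<omega>) m" for \<omega>
    using hadamard_bowtie_first_variation[OF H mq \<eta>, of "Y \<omega>"] unfolding U_def \<psi>_def by simp
  then have "expectation (\<lambda>\<omega>. dist m q * U \<omega> + (1/2) * \<eta>\<^sup>2 * (dist m q)\<^sup>2 * \<psi> \<omega>)
      \<le> expectation (\<lambda>\<omega>. dist (Y \<omega>) q - dist (Y \<omega>) m)"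
    using U \<psi> integrable_dist_diff[OF finite_measure_axioms Y] by (intro integral_mono) auto
  also have "expectation (\<lambda>\<omega>. dist m q * U \<omega> + (1/2) * \<eta>\<^sup>2 * (dist m q)\<^sup>2 * \<psi> \<omega>)
      = dist m q * expectation U + (1/2) * \<eta>\<^sup>2 * (dist m q)\<^sup>2 * expectation \<psi>"
    using U \<psi> by simp
  finally show ?thesis
    using mult_nonneg_nonneg[OF zero_le_dist[of m q] U(2)] unfolding \<psi>_def[symmetric] by linarith
qed

theorem mainTheorem2:
  fixes M :: "'s measure" and Y :: "'s \<Rightarrow> 'a::complete_space"
    and y\<^sub>0 m q :: 'a and \<eta> :: real
  assumes "hadamard TYPE('a)"
    and "prob_space M"
    and "Y \<in> borel_measurable M"
    and "\<forall>x::'a. prob_space.expectation M (\<lambda>\<omega>. dist (Y \<omega>) m - dist (Y \<omega>) y\<^sub>0)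
                 \<le> prob_space.expectation M (\<lambda>\<omega>. dist (Y \<omega>) x - dist (Y \<omega>) y\<^sub>0)"
    and "q \<noteq> m"
    and "0 \<le> \<eta>" and "\<eta> \<le> 1"
  shows "prob_space.expectation M (\<lambda>\<omega>. dist (Y \<omega>) q - dist (Y \<omega>) m)
         \<ge> (1/2) * \<eta>^2 * (dist q m)^2 *
           prob_space.expectation M
             (\<lambda>\<omega>. (1 / max (dist (Y \<omega>) m) (dist (Y \<omega>) q)) * indicator (bowtie_compl m q \<eta>) (Y \<omega>))"
proof -
  define \<psi> where "\<psi> = (\<lambda>\<omega>. (1 / max (dist (Y \<omega>) m) (dist (Y \<omega>) q)) * indicator (bowtie_compl m q \<eta>) (Y \<omega>))"
  have excess: "0 \<le> prob_space.expectation M (\<lambda>\<omega>. dist (Y \<omega>) q - dist (Y \<omega>) m)"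
    using frechet_median_excess_nonneg[OF assms(2-4)] .
  \<comment> \<open>a non-integrable \<open>\<psi>\<close> has expectation 0 by convention, and the claim reduces to \<open>excess\<close>\<close>
  consider "\<eta> = 0 \<or> \<not> integrable M \<psi>" | "0 < \<eta>" "integrable M \<psi>" using \<open>0 \<le> \<eta>\<close> by linarith
  then show ?thesis
  proof cases
    case 1
    with excess show ?thesis unfolding \<psi>_def[symmetric] by (auto simp: not_integrable_integral_eq)
  next
    case 2
    with frechet_median_bowtie_bound[OF assms(1-4) _ _ 2(2)[unfolded \<psi>_def]] \<open>q \<noteq> m\<close>
    show ?thesis by (simp add: dist_commute)
  qed
qed

end
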